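(* Assume $\Phi_h=M_h=\mathbb{P}_1$. Then any solution $(\phi^{n+1},\mu^{n+1})$ of the J$_\varepsilon$-scheme satisfies $$\int_\Omega\big(I_h(\phi^{n+1}_-)\big)^2d\boldsymbol x\le C\sqrt{\varepsilon(1-\varepsilon)}\le C\sqrt{\varepsilon}\quad\text{and}\quad\int_\Omega\Big(I_h\big((\phi^{n+1}-1)_+\big)\Big)^2d\boldsymbol x\le C\sqrt{\varepsilon(1-\varepsilon)}\le C\sqrt{\varepsilon},$$ where $C$ depends on the initial energy $E(\phi^0)$ and on $\int_\Omega I_h(J_\varepsilon(\phi^0))\,d\boldsymbol x$.
   Context: $\Omega\subset\mathbb{R}^d$ ($d=1,2,3$) bounded, $\eta>0$, $\varepsilon\in(0,1/2)$. $f_-=\min\{f,0\}$, $f_+=\max\{f,0\}$. $F(\phi)=\frac1{4\eta^2}\phi^2(\phi-1)^2=F_c+F_e$ with $F_c(\phi)=\frac1{4\eta^2}(\phi^4-2\phi^3+\frac32\phi^2)$, $F_e(\phi)=-\frac1{8\eta^2}\phi^2$; $E(\phi)=\int_\Omega(\frac12|\nabla\phi|^2+F(\phi))d\boldsymbol x$. The interval $[0,T]$ is split into $N$ steps of size $\Delta t=T/N$, $n=0,\dots,N-1$. $\mathcal T_h$ is a structured triangulation of $\Omega$ in which every element $I$ has vertices $\boldsymbol x_0,\dots,\boldsymbol x_d$ with $\boldsymbol x_k-\boldsymbol x_0$ parallel to the $k$-th coordinate axis; $\Phi_h=M_h$ is the space of continuous piecewise $\mathbb{P}_1$ functions. $I_h$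 is nodal $\mathbb{P}_1$ interpolation, $(f,g)_h=\int_\Omega I_h(fg)\,d\boldsymbol x$, $(\cdot,\cdot)$ the $L^2$ product. $J(\phi)=(1-2\phi)\arcsin(\sqrt{1-\phi})+\sqrt{(1-\phi)\phi}+2\arcsin(\sqrt{1/2})\,\phi$ on $[0,1]$ (so $J''(\phi)=1/\sqrt{\phi(1-\phi)}$); $J_\varepsilon\in C^2(\mathbb{R})$ equals $J$ on $[\varepsilon,1-\varepsilon]$ and its second-order Taylor polynomial at $\varepsilon$ (resp. $1-\varepsilon$) for $\phi<\varepsilon$ (resp. $\phi>1-\varepsilon$). For $\phi\in\Phi_h$, $M^J_\varepsilon(\phi)$ is the piecewise constant diagonal matrix whose $k$-th entry on $I$ is $\Big(\frac{\phi(\boldsymbol x_k)-\phi(\boldsymbol x_0)}{J_\varepsilon'(\phi(\boldsymbol x_k))-J_\varepsilon'(\phi(\boldsymbol x_0))}\Big)^2$ if $\phi(\boldsymbol x_k)\neq\phi(\boldsymbol x_0)$ and $\big(1/J_\varepsilon''(\phi(\boldsymbol x_0))\big)^2$ otherwise. J$_\varepsilon$-scheme: given $\phi^n\in\Phi_h$ (starting from $\phi^0\in\Phi_h$), find $(\phi^{n+1},\mu^{n+1})\in\Phi_h\times M_h$ such that for all $(\bar\phi,\bar\mu)\in\Phi_h\times M_h$: $\frac1{\Delta t}(\phi^{n+1}-\phi^n,\bar\mu)_h+(M^J_\varepsilon(\phi^{n+1})\nabla\mu^{n+1},\nabla\bar\mu)=0$ and $(\nabla\phi^{n+1},\nabla\bar\phi)+(F_c'(\phi^{n+1})+F_e'(\phi^n),\bar\phi)=(\mu^{n+1},\bar\phi)_h$.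 *)

theory Defs
  imports "HOL-Analysis.Analysis"
begin

definition Ffun :: "real \<Rightarrow> real \<Rightarrow> real" where
  "Ffun \<eta> \<phi> = \<phi>\<^sup>2 * (\<phi> - 1)\<^sup>2 / (4 * \<eta>\<^sup>2)"

definition Fc :: "real \<Rightarrow> real \<Rightarrow> real" where
  "Fc \<eta> \<phi> = (\<phi> ^ 4 - 2 * \<phi> ^ 3 + 3 / 2 * \<phi>\<^sup>2) / (4 * \<eta>\<^sup>2)"

definition Fe :: "real \<Rightarrow> real \<Rightarrow> real" where
  "Fe \<eta> \<phi> = - \<phi>\<^sup>2 / (8 * \<eta>\<^sup>2)"

definition Jfun :: "real \<Rightarrow> real" where
  "Jfun \<phi> = (1 - 2 * \<phi>) * arcsin (sqrt (1 - \<phi>)) + sqrt ((1 - \<phi>) * \<phi>)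
             + 2 * arcsin (sqrt (1 / 2)) * \<phi>"

definition Jeps :: "real \<Rightarrow> real \<Rightarrow> real" where
  "Jeps \<epsilon> \<phi> =
     (if \<phi> < \<epsilon> then Jfun \<epsilon> + deriv Jfun \<epsilon> * (\<phi> - \<epsilon>)
                      + deriv (deriv Jfun) \<epsilon> / 2 * (\<phi> - \<epsilon>)\<^sup>2
      else if \<phi> > 1 - \<epsilon> then Jfun (1 - \<epsilon>) + deriv Jfun (1 - \<epsilon>) * (\<phi> - (1 - \<epsilon>))
                      + deriv (deriv Jfun) (1 - \<epsilon>) / 2 * (\<phi> - (1 - \<epsilon>))\<^sup>2
      else Jfun \<phi>)"

text \<open>An element is a pair (x0, h): its vertices are x0 and x_k = x0 + h_k e_k, k ranging
  over the coordinate index type 'd (so x_k - x0 is parallel to the k-th axis).\<close>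
type_synonym 'd elem = "(real^'d) \<times> (real^'d)"

definition vtx :: "'d::finite elem \<Rightarrow> 'd \<Rightarrow> real^'d" where
  "vtx I k = fst I + (snd I $ k) *\<^sub>R axis k 1"

definition verts :: "'d::finite elem \<Rightarrow> (real^'d) set" where
  "verts I = insert (fst I) (range (vtx I))"

definition elem_set :: "'d::finite elem \<Rightarrow> (real^'d) set" where
  "elem_set I = convex hull (verts I)"

definition structured_mesh :: "(real^'d::finite) set \<Rightarrow> 'd elem set \<Rightarrow> bool" where
  "structured_mesh \<Omega> Th \<longleftrightarrow>
     finite Th \<and> Th \<noteq> {} \<and>
     (\<forall>I\<in>Th. \<forall>k. snd I $ k \<noteq> 0) \<and>
     inj_on verts Th \<and>
     (\<forall>I\<in>Th. \<forall>I'\<in>Th. elem_set I \<inter> elem_set I' = convex hull (verts I \<inter> verts I')) \<and>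
     \<Omega> = \<Union> (elem_set ` Th)"

text \<open>A function of Phi_h = M_h is given by its nodal values v (only values at mesh
  nodes matter).\<close>
definition p1grad :: "'d::finite elem \<Rightarrow> (real^'d \<Rightarrow> real) \<Rightarrow> real^'d" where
  "p1grad I v = (\<chi> k. (v (vtx I k) - v (fst I)) / (snd I $ k))"

definition p1loc :: "'d::finite elem \<Rightarrow> (real^'d \<Rightarrow> real) \<Rightarrow> real^'d \<Rightarrow> real" where
  "p1loc I v x = v (fst I) + p1grad I v \<bullet> (x - fst I)"

definition mint :: "'d::finite elem set \<Rightarrow> ('d elem \<Rightarrow> real^'d \<Rightarrow> real) \<Rightarrow> real" where
  "mint Th G = (\<Sum>I\<in>Th. integral (elem_set I) (G I))"

text \<open>Mass-lumped product (f,g)_h = integral of I_h(f g).\<close>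
definition lumped :: "'d::finite elem set \<Rightarrow> (real^'d \<Rightarrow> real) \<Rightarrow> (real^'d \<Rightarrow> real) \<Rightarrow> real" where
  "lumped Th f g = mint Th (\<lambda>I. p1loc I (\<lambda>y. f y * g y))"

definition energy :: "real \<Rightarrow> 'd::finite elem set \<Rightarrow> (real^'d \<Rightarrow> real) \<Rightarrow> real" where
  "energy \<eta> Th u = mint Th (\<lambda>I x. (norm (p1grad I u))\<^sup>2 / 2 + Ffun \<eta> (p1loc I u x))"

definition MJ :: "real \<Rightarrow> (real^'d::finite \<Rightarrow> real) \<Rightarrow> 'd elem \<Rightarrow> 'd \<Rightarrow> real" where
  "MJ \<epsilon> \<phi> I k =
     (let a = \<phi> (fst I); b = \<phi> (vtx I k) in
      if b \<noteq> a then ((b - a) / (deriv (Jeps \<epsilon>) b - deriv (Jeps \<epsilon>) a))\<^sup>2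
      else (1 / deriv (deriv (Jeps \<epsilon>)) a)\<^sup>2)"

definition Jeps_step :: "real \<Rightarrow> real \<Rightarrow> 'd::finite elem set \<Rightarrow> real \<Rightarrow>
    (real^'d \<Rightarrow> real) \<Rightarrow> (real^'d \<Rightarrow> real) \<Rightarrow> (real^'d \<Rightarrow> real) \<Rightarrow> bool" where
  "Jeps_step \<eta> \<epsilon> Th dt phin phi1 mu1 \<longleftrightarrow>
     (\<forall>mubar. lumped Th (\<lambda>y. phi1 y - phin y) mubar / dt
        + mint Th (\<lambda>I x. \<Sum>k\<in>UNIV. MJ \<epsilon> phi1 I k * (p1grad I mu1 $ k) * (p1grad I mubar $ k)) = 0) \<and>
     (\<forall>phibar. mint Th (\<lambda>I x. p1grad I phi1 \<bullet> p1grad I phibar)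
        + mint Th (\<lambda>I x. (deriv (Fc \<eta>) (p1loc I phi1 x) + deriv (Fe \<eta>) (p1loc I phin x))
                          * p1loc I phibar x)
        = lumped Th mu1 phibar)"

definition Jint :: "real \<Rightarrow> 'd::finite elem set \<Rightarrow> (real^'d \<Rightarrow> real) \<Rightarrow> real" where
  "Jint \<epsilon> Th u = mint Th (\<lambda>I. p1loc I (\<lambda>y. Jeps \<epsilon> (u y)))"

definition neg_sq :: "'d::finite elem set \<Rightarrow> (real^'d \<Rightarrow> real) \<Rightarrow> real" where
  "neg_sq Th u = mint Th (\<lambda>I x. (p1loc I (\<lambda>y. min (u y) 0) x)\<^sup>2)"

definition pos_sq :: "'d::finite elem set \<Rightarrow> (real^'d \<Rightarrow> real) \<Rightarrow> real" where
  "pos_sq Th u = mint Th (\<lambda>I x. (p1loc I (\<lambda>y. max (u y - 1) 0) x)\<^sup>2)"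

end

theory Submission
  imports Defs
begin

text \<open>
  Two discrete Lyapunov estimates drive the proof. Testing the second equation of the
  scheme with \<open>\<phi>\<^sup>n\<^sup>+\<^sup>1 - \<phi>\<^sup>n\<close> and the first with \<open>\<mu>\<^sup>n\<^sup>+\<^sup>1\<close>, the convex-concave splitting
  of \<open>F\<close> makes the energy decrease by \<open>\<Delta>t Q\<close>, where \<open>Q = (M\<^sup>J\<^sub>\<epsilon> \<nabla>\<mu>, \<nabla>\<mu>)\<close> is the
  dissipation. Testing the first equation with \<open>I\<^sub>h J\<^sub>\<epsilon>'(\<phi>\<^sup>n\<^sup>+\<^sup>1)\<close> and using convexity of
  \<open>J\<^sub>\<epsilon>\<close> shows that \<open>\<integral> I\<^sub>h J\<^sub>\<epsilon>(\<phi>)\<close> grows by at most \<open>\<Delta>t (Q/2 + E(\<phi>\<^sup>n\<^sup>+\<^sup>1))\<close>: the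
  mobility is built so that \<open>M\<^sup>J\<^sub>\<epsilon> \<partial>\<^sub>k J\<^sub>\<epsilon>'(\<phi>) = \<plusminus>(M\<^sup>J\<^sub>\<epsilon>)\<^sup>1\<^sup>/\<^sup>2 \<partial>\<^sub>k \<phi>\<close> on every
  element, and Young's inequality splits the cross term. Summing over the time steps
  bounds \<open>\<integral> I\<^sub>h J\<^sub>\<epsilon>(\<phi>\<^sup>n\<^sup>+\<^sup>1)\<close> by \<open>\<integral> I\<^sub>h J\<^sub>\<epsilon>(\<phi>\<^sup>0) + (1/2 + T) E(\<phi>\<^sup>0)\<close>. Finally, outside
  \<open>[\<epsilon>, 1 - \<epsilon>]\<close> the function \<open>J\<^sub>\<epsilon>\<close> is a nonnegative parabola of curvature
  \<open>1 / \<surd>(\<epsilon>(1 - \<epsilon>))\<close>, so \<open>\<phi>\<^sub>-\<^sup>2 \<le> 2 \<surd>(\<epsilon>(1 - \<epsilon>)) J\<^sub>\<epsilon>(\<phi>)\<close> and likewise for \<open>(\<phi> - 1)\<^sub>+\<^sup>2\<close>;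
  Jensen's inequality for the \<open>\<bbbP>\<^sub>1\<close> interpolant carries this to the integrals.
\<close>

section \<open>The entropy density \<open>J\<close> and its regularisation\<close>

definition dJ :: "real \<Rightarrow> real" where
  "dJ x = 2 * arcsin (sqrt (1 / 2)) - 2 * arcsin (sqrt (1 - x))"

definition ddJ :: "real \<Rightarrow> real" where
  "ddJ x = 1 / sqrt (x * (1 - x))"

lemma has_real_derivative_arcsin_sqrt_one_minus:
  assumes "0 < x" "x < 1"
  shows "((\<lambda>x. arcsin (sqrt (1 - x))) has_real_derivative - ddJ x / 2) (at x)"
proof -
  have "((\<lambda>x. sqrt (1 - x)) has_real_derivative inverse (sqrt (1 - x)) / 2 * (-1)) (at x)"
    using assms by (intro DERIV_chain'[OF _ DERIV_real_sqrt] derivative_eq_intros refl) auto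
  moreover have "0 \<le> sqrt (1 - x)" "sqrt (1 - x) < 1"
    using assms by (simp_all add: real_sqrt_less_iff)
  ultimately have "((\<lambda>x. arcsin (sqrt (1 - x))) has_real_derivative
      inverse (sqrt (1 - (sqrt (1 - x))\<^sup>2)) * (inverse (sqrt (1 - x)) / 2 * (-1))) (at x)"
    by (intro DERIV_chain'[OF _ DERIV_arcsin]) (assumption, linarith+)
  moreover have "inverse (sqrt (1 - (sqrt (1 - x))\<^sup>2)) * (inverse (sqrt (1 - x)) / 2 * (-1))
      = - ddJ x / 2"
    unfolding ddJ_def real_sqrt_mult using assms by (simp add: field_simps)
  ultimately show ?thesis by simp
qed

lemma has_real_derivative_Jfun:
  assumes "0 < x" "x < 1"
  shows "(Jfun has_real_derivative dJ x) (at x)"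
proof -
  have "((\<lambda>x. (1 - x) * x) has_real_derivative 1 - 2 * x) (at x)"
    by (auto intro!: derivative_eq_intros)
  then have "((\<lambda>x. sqrt ((1 - x) * x)) has_real_derivative
      inverse (sqrt ((1 - x) * x)) / 2 * (1 - 2 * x)) (at x)"
    using assms by (intro DERIV_chain'[OF _ DERIV_real_sqrt]) auto
  then have "(Jfun has_real_derivative
      ((1 - 2 * x) * (- ddJ x / 2) + (-2) * arcsin (sqrt (1 - x)))
      + inverse (sqrt ((1 - x) * x)) / 2 * (1 - 2 * x) + 2 * arcsin (sqrt (1 / 2))) (at x)"
    unfolding Jfun_def[abs_def] using assms
    by (intro DERIV_add DERIV_mult' has_real_derivative_arcsin_sqrt_one_minus)
      (auto intro!: derivative_eq_intros)
  moreover have "((1 - 2 * x) * (- ddJ x / 2) + (-2) * arcsin (sqrt (1 - x)))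
      + inverse (sqrt ((1 - x) * x)) / 2 * (1 - 2 * x) + 2 * arcsin (sqrt (1 / 2)) = dJ x"
    by (simp add: dJ_def ddJ_def mult.commute field_simps)
  ultimately show ?thesis by simp
qed

lemma has_real_derivative_dJ:
  assumes "0 < x" "x < 1"
  shows "(dJ has_real_derivative ddJ x) (at x)"
proof -
  have "(dJ has_real_derivative 0 - 2 * (- ddJ x / 2)) (at x)"
    unfolding dJ_def[abs_def] using assms
    by (intro DERIV_diff DERIV_const DERIV_cmult has_real_derivative_arcsin_sqrt_one_minus)
  then show ?thesis by simp
qed

lemma deriv_Jfun: "0 < x \<Longrightarrow> x < 1 \<Longrightarrow> deriv Jfun x = dJ x"
  by (rule DERIV_imp_deriv[OF has_real_derivative_Jfun])

lemma deriv_deriv_Jfun: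
  assumes "0 < x" "x < 1"
  shows "deriv (deriv Jfun) x = ddJ x"
proof -
  have "(deriv Jfun has_real_derivative ddJ x) (at x)"
    by (rule has_field_derivative_transform_within_open[OF has_real_derivative_dJ[OF assms],
          of "{0<..<1}"])
      (use assms in \<open>auto simp: deriv_Jfun\<close>)
  then show ?thesis by (rule DERIV_imp_deriv)
qed

lemma arcsin_sqrt_mono:
  assumes "0 \<le> a" "a \<le> b" "b \<le> 1"
  shows "arcsin (sqrt a) \<le> arcsin (sqrt b)"
proof (rule arcsin_le_arcsin)
  have "0 \<le> sqrt a" using assms by simp
  then show "- 1 \<le> sqrt a" by linarith
  show "sqrt a \<le> sqrt b" "sqrt b \<le> 1" using assms by simp_all
qed

lemma dJ_mono: "0 \<le> x \<Longrightarrow> x \<le> y \<Longrightarrow> y \<le> 1 \<Longrightarrow> dJ x \<le> dJ y"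
  unfolding dJ_def using arcsin_sqrt_mono[of "1 - y" "1 - x"] by simp

lemma dJ_nonpos: "0 \<le> x \<Longrightarrow> x \<le> 1 / 2 \<Longrightarrow> dJ x \<le> 0"
  using dJ_mono[of x "1 / 2"] by (simp add: dJ_def)

lemma dJ_nonneg: "1 / 2 \<le> x \<Longrightarrow> x \<le> 1 \<Longrightarrow> 0 \<le> dJ x"
  using dJ_mono[of "1 / 2" x] by (simp add: dJ_def)

lemma ddJ_pos: "0 < x \<Longrightarrow> x < 1 \<Longrightarrow> 0 < ddJ x"
  unfolding ddJ_def by simp

lemma ddJ_one_minus: "ddJ (1 - x) = ddJ x"
  unfolding ddJ_def by (simp add: mult.commute)

lemma Jfun_nonneg:
  assumes "0 \<le> x" "x \<le> 1"
  shows "0 \<le> Jfun x"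
proof -
  define a where "a = arcsin (sqrt (1 / 2))"
  have a: "0 \<le> a"
    unfolding a_def using arcsin_sqrt_mono[of 0 "1 / 2"] by simp
  have arc: "0 \<le> arcsin (sqrt (1 - x))"
    using assms arcsin_sqrt_mono[of 0 "1 - x"] by simp
  have J: "Jfun x = (1 - 2 * x) * arcsin (sqrt (1 - x)) + sqrt ((1 - x) * x) + 2 * a * x"
    by (simp add: Jfun_def a_def)
  have "0 \<le> sqrt ((1 - x) * x)" using assms by simp
  moreover have "0 \<le> (1 - 2 * x) * arcsin (sqrt (1 - x)) + 2 * a * x"
  proof (cases "x \<le> 1 / 2")
    case True
    then show ?thesis using arc a assms by simp
  next
    case False
    have "arcsin (sqrt (1 - x)) \<le> a"
      unfolding a_def using False assms by (intro arcsin_sqrt_mono) auto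
    then have "(1 - 2 * x) * a \<le> (1 - 2 * x) * arcsin (sqrt (1 - x))"
      using False by (intro mult_left_mono_neg) auto
    then show ?thesis using a by (simp add: algebra_simps)
  qed
  ultimately show ?thesis unfolding J by linarith
qed

lemma Jeps_eq:
  assumes "0 < \<epsilon>" "\<epsilon> < 1 / 2"
  shows "Jeps \<epsilon> x =
    (if x < \<epsilon> then Jfun \<epsilon> + dJ \<epsilon> * (x - \<epsilon>) + ddJ \<epsilon> / 2 * (x - \<epsilon>)\<^sup>2
     else if x > 1 - \<epsilon> then Jfun (1 - \<epsilon>) + dJ (1 - \<epsilon>) * (x - (1 - \<epsilon>))
                            + ddJ \<epsilon> / 2 * (x - (1 - \<epsilon>))\<^sup>2
     else Jfun x)"
  using assms by (simp add: Jeps_def deriv_Jfun deriv_deriv_Jfun ddJ_one_minus)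

text \<open>\<open>J\<^sub>\<epsilon>'\<close> is \<open>J'\<close> at the projection of \<open>x\<close> onto \<open>[\<epsilon>, 1 - \<epsilon>]\<close>, continued linearly
  with slope \<open>J''(\<epsilon>) = J''(1 - \<epsilon>)\<close>.\<close>
definition dJeps :: "real \<Rightarrow> real \<Rightarrow> real" where
  "dJeps \<epsilon> x = dJ (max \<epsilon> (min x (1 - \<epsilon>))) + ddJ \<epsilon> * (x - max \<epsilon> (min x (1 - \<epsilon>)))"

lemma has_field_derivative_at_split:
  fixes f :: "real \<Rightarrow> real"
  assumes "(f has_real_derivative D) (at x within {..x})"
    and "(f has_real_derivative D) (at x within {x..})"
  shows "(f has_real_derivative D) (at x)"
proof -
  have "((\<lambda>y. (f y - f x) / (y - x)) \<longlongrightarrow> D) (at x within {..x} \<union> {x..})"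
    using assms by (simp add: Lim_within_Un has_field_derivative_iff)
  moreover have "{..x} \<union> {x..} = UNIV" by auto
  ultimately show ?thesis by (simp add: has_field_derivative_iff)
qed

lemma dJeps_eq:
  assumes "0 < \<epsilon>" "\<epsilon> < 1 / 2"
  shows "dJeps \<epsilon> x =
    (if x < \<epsilon> then dJ \<epsilon> + ddJ \<epsilon> * (x - \<epsilon>)
     else if x > 1 - \<epsilon> then dJ (1 - \<epsilon>) + ddJ \<epsilon> * (x - (1 - \<epsilon>))
     else dJ x)"
  using assms by (simp add: dJeps_def max_def min_def)

lemma has_real_derivative_Jeps:
  assumes \<epsilon>: "0 < \<epsilon>" "\<epsilon> < 1 / 2"
  shows "(Jeps \<epsilon> has_real_derivative dJeps \<epsilon> x) (at x)"
proof -
  define L where "L x = Jfun \<epsilon> + dJ \<epsilon> * (x - \<epsilon>) + ddJ \<epsilon> / 2 * (x - \<epsilon>)\<^sup>2" for x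
  define R where "R x = Jfun (1 - \<epsilon>) + dJ (1 - \<epsilon>) * (x - (1 - \<epsilon>)) + ddJ \<epsilon> / 2 * (x - (1 - \<epsilon>))\<^sup>2"
    for x
  have JL: "x \<le> \<epsilon> \<Longrightarrow> Jeps \<epsilon> x = L x"
    and JR: "1 - \<epsilon> \<le> x \<Longrightarrow> Jeps \<epsilon> x = R x"
    and JM: "\<epsilon> \<le> x \<Longrightarrow> x \<le> 1 - \<epsilon> \<Longrightarrow> Jeps \<epsilon> x = Jfun x" for x
    using \<epsilon> by (auto simp: Jeps_eq L_def R_def)
  have dL: "(L has_real_derivative dJ \<epsilon> + ddJ \<epsilon> * (x - \<epsilon>)) (at x)"
    and dR: "(R has_real_derivative dJ (1 - \<epsilon>) + ddJ \<epsilon> * (x - (1 - \<epsilon>))) (at x)" for x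
    unfolding L_def R_def by (auto intro!: derivative_eq_intros simp: power2_eq_square algebra_simps)
  have dM: "\<epsilon> \<le> x \<Longrightarrow> x \<le> 1 - \<epsilon> \<Longrightarrow> (Jfun has_real_derivative dJ x) (at x)" for x
    using \<epsilon> by (intro has_real_derivative_Jfun) auto
  consider "x < \<epsilon>" | "x = \<epsilon>" | "\<epsilon> < x" "x < 1 - \<epsilon>" | "x = 1 - \<epsilon>" | "1 - \<epsilon> < x"
    by linarith
  then show ?thesis
  proof cases
    case 1
    then show ?thesis
      using \<epsilon> has_field_derivative_transform_within_open[OF dL[of x], of "{..<\<epsilon>}"]
      by (auto simp: dJeps_eq JL)
  next
    case 2
    have "(L has_real_derivative dJ \<epsilon>) (at \<epsilon> within {..\<epsilon>})"
      using dL[of \<epsilon>] by (simp add: has_field_derivative_at_within)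
    then have "(Jeps \<epsilon> has_real_derivative dJ \<epsilon>) (at \<epsilon> within {..\<epsilon>})"
      by (rule has_field_derivative_transform_within[where d = 1]) (auto simp: JL)
    moreover have "(Jeps \<epsilon> has_real_derivative dJ \<epsilon>) (at \<epsilon> within {\<epsilon>..})"
      by (rule has_field_derivative_transform_within[where d = "1 - 2 * \<epsilon>",
            OF dM[THEN has_field_derivative_at_within]])
        (use \<epsilon> in \<open>auto simp: dist_real_def JM\<close>)
    ultimately show ?thesis
      using 2 \<epsilon> by (auto simp: dJeps_eq intro: has_field_derivative_at_split)
  next
    case 3
    then show ?thesis
      using \<epsilon> has_field_derivative_transform_within_open[OF dM[of x], of "{\<epsilon><..<1 - \<epsilon>}"]
      by (auto simp: dJeps_eq JM)
  next
    case 4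
    have "(R has_real_derivative dJ (1 - \<epsilon>)) (at (1 - \<epsilon>) within {1 - \<epsilon>..})"
      using dR[of "1 - \<epsilon>"] by (simp add: has_field_derivative_at_within)
    then have "(Jeps \<epsilon> has_real_derivative dJ (1 - \<epsilon>)) (at (1 - \<epsilon>) within {1 - \<epsilon>..})"
      by (rule has_field_derivative_transform_within[where d = 1]) (auto simp: JR)
    moreover have "(Jeps \<epsilon> has_real_derivative dJ (1 - \<epsilon>)) (at (1 - \<epsilon>) within {..1 - \<epsilon>})"
      by (rule has_field_derivative_transform_within[where d = "1 - 2 * \<epsilon>",
            OF dM[THEN has_field_derivative_at_within]])
        (use \<epsilon> in \<open>auto simp: dist_real_def JM\<close>)
    ultimately show ?thesis
      using 4 \<epsilon> by (auto simp: dJeps_eq intro: has_field_derivative_at_split)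
  next
    case 5
    then show ?thesis
      using \<epsilon> has_field_derivative_transform_within_open[OF dR[of x], of "{1 - \<epsilon><..}"]
      by (auto simp: dJeps_eq JR)
  qed
qed

lemma deriv_Jeps: "0 < \<epsilon> \<Longrightarrow> \<epsilon> < 1 / 2 \<Longrightarrow> deriv (Jeps \<epsilon>) = dJeps \<epsilon>"
  by (intro ext DERIV_imp_deriv has_real_derivative_Jeps)

lemma mono_dJeps:
  assumes \<epsilon>: "0 < \<epsilon>" "\<epsilon> < 1 / 2"
  shows "mono (dJeps \<epsilon>)"
proof (rule monoI)
  fix x y :: real
  assume "x \<le> y"
  define p q where "p = max \<epsilon> (min x (1 - \<epsilon>))" and "q = max \<epsilon> (min y (1 - \<epsilon>))"
  have "\<epsilon> \<le> p" "p \<le> q" "q \<le> 1 - \<epsilon>" "x - p \<le> y - q"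
    using \<open>x \<le> y\<close> \<epsilon> unfolding p_def q_def by linarith+
  then have "dJ p \<le> dJ q" "ddJ \<epsilon> * (x - p) \<le> ddJ \<epsilon> * (y - q)"
    using \<epsilon> ddJ_pos[of \<epsilon>] by (auto intro!: dJ_mono mult_left_mono)
  then show "dJeps \<epsilon> x \<le> dJeps \<epsilon> y"
    unfolding dJeps_def p_def[symmetric] q_def[symmetric] by linarith
qed

lemma Jeps_tangent_le:
  assumes \<epsilon>: "0 < \<epsilon>" "\<epsilon> < 1 / 2"
  shows "Jeps \<epsilon> b + (a - b) * dJeps \<epsilon> b \<le> Jeps \<epsilon> a"
proof (cases a b rule: linorder_cases)
  case less
  then obtain z where "a < z" "z < b" "Jeps \<epsilon> b - Jeps \<epsilon> a = (b - a) * dJeps \<epsilon> z"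
    using MVT2[of a b "Jeps \<epsilon>" "dJeps \<epsilon>"] has_real_derivative_Jeps[OF \<epsilon>] by blast
  moreover have "(b - a) * dJeps \<epsilon> z \<le> (b - a) * dJeps \<epsilon> b"
    using monoD[OF mono_dJeps[OF \<epsilon>], of z b] \<open>z < b\<close> less by (intro mult_left_mono) auto
  ultimately show ?thesis
    by (simp add: algebra_simps)
next
  case greater
  then obtain z where "b < z" "z < a" "Jeps \<epsilon> a - Jeps \<epsilon> b = (a - b) * dJeps \<epsilon> z"
    using MVT2[of b a "Jeps \<epsilon>" "dJeps \<epsilon>"] has_real_derivative_Jeps[OF \<epsilon>] by blast
  moreover have "(a - b) * dJeps \<epsilon> b \<le> (a - b) * dJeps \<epsilon> z"
    using monoD[OF mono_dJeps[OF \<epsilon>], of b z] \<open>b < z\<close> greater by (intro mult_left_mono) auto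
  ultimately show ?thesis
    by (simp add: algebra_simps)
qed simp

lemma Jeps_nonneg:
  assumes \<epsilon>: "0 < \<epsilon>" "\<epsilon> < 1 / 2"
  shows "0 \<le> Jeps \<epsilon> x"
proof -
  have "0 \<le> Jfun \<epsilon>" "0 \<le> Jfun (1 - \<epsilon>)" "dJ \<epsilon> \<le> 0" "0 \<le> dJ (1 - \<epsilon>)" "0 < ddJ \<epsilon>"
    using \<epsilon> by (auto intro: Jfun_nonneg dJ_nonpos dJ_nonneg ddJ_pos)
  then show ?thesis
    using \<epsilon> Jfun_nonneg[of x]
    by (auto simp: Jeps_eq intro!: add_nonneg_nonneg mult_nonpos_nonpos)
qed

lemma sq_dist_le_Jeps_below:
  assumes \<epsilon>: "0 < \<epsilon>" "\<epsilon> < 1 / 2" and "x < \<epsilon>"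
  shows "(x - \<epsilon>)\<^sup>2 \<le> 2 * sqrt (\<epsilon> * (1 - \<epsilon>)) * Jeps \<epsilon> x"
proof -
  have "0 \<le> Jfun \<epsilon> + dJ \<epsilon> * (x - \<epsilon>)"
    using \<epsilon> \<open>x < \<epsilon>\<close> by (intro add_nonneg_nonneg Jfun_nonneg mult_nonpos_nonpos dJ_nonpos) auto
  then have "(x - \<epsilon>)\<^sup>2 \<le> 2 * sqrt (\<epsilon> * (1 - \<epsilon>)) * (Jfun \<epsilon> + dJ \<epsilon> * (x - \<epsilon>)) + (x - \<epsilon>)\<^sup>2"
    using \<epsilon> by simp
  also have "\<dots> = 2 * sqrt (\<epsilon> * (1 - \<epsilon>)) * Jeps \<epsilon> x"
    using \<epsilon> \<open>x < \<epsilon>\<close> by (simp add: Jeps_eq ddJ_def algebra_simps)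
  finally show ?thesis .
qed

lemma sq_dist_le_Jeps_above:
  assumes \<epsilon>: "0 < \<epsilon>" "\<epsilon> < 1 / 2" and "1 - \<epsilon> < x"
  shows "(x - (1 - \<epsilon>))\<^sup>2 \<le> 2 * sqrt (\<epsilon> * (1 - \<epsilon>)) * Jeps \<epsilon> x"
proof -
  have "0 \<le> Jfun (1 - \<epsilon>) + dJ (1 - \<epsilon>) * (x - (1 - \<epsilon>))"
    using \<epsilon> \<open>1 - \<epsilon> < x\<close> by (intro add_nonneg_nonneg Jfun_nonneg mult_nonneg_nonneg dJ_nonneg) auto
  then have "(x - (1 - \<epsilon>))\<^sup>2
      \<le> 2 * sqrt (\<epsilon> * (1 - \<epsilon>)) * (Jfun (1 - \<epsilon>) + dJ (1 - \<epsilon>) * (x - (1 - \<epsilon>))) + (x - (1 - \<epsilon>))\<^sup>2"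
    using \<epsilon> by simp
  also have "\<dots> = 2 * sqrt (\<epsilon> * (1 - \<epsilon>)) * Jeps \<epsilon> x"
    using \<epsilon> \<open>1 - \<epsilon> < x\<close> by (simp add: Jeps_eq ddJ_def algebra_simps)
  finally show ?thesis .
qed

lemma neg_part_sq_le_Jeps:
  assumes \<epsilon>: "0 < \<epsilon>" "\<epsilon> < 1 / 2"
  shows "(min x 0)\<^sup>2 \<le> 2 * sqrt (\<epsilon> * (1 - \<epsilon>)) * Jeps \<epsilon> x"
proof (cases "x < 0")
  case True
  then have "(min x 0)\<^sup>2 = x\<^sup>2"
    by simp
  also have "\<dots> \<le> (x - \<epsilon>)\<^sup>2"
    using True \<epsilon> by (simp add: power2_eq_square algebra_simps mult_left_mono_neg)
  also have "\<dots> \<le> 2 * sqrt (\<epsilon> * (1 - \<epsilon>)) * Jeps \<epsilon> x"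
    using True \<epsilon> by (intro sq_dist_le_Jeps_below) auto
  finally show ?thesis .
next
  case False
  then show ?thesis
    using Jeps_nonneg[OF \<epsilon>, of x] \<epsilon> by simp
qed

lemma overshoot_sq_le_Jeps:
  assumes \<epsilon>: "0 < \<epsilon>" "\<epsilon> < 1 / 2"
  shows "(max (x - 1) 0)\<^sup>2 \<le> 2 * sqrt (\<epsilon> * (1 - \<epsilon>)) * Jeps \<epsilon> x"
proof (cases "x > 1")
  case True
  then have "(max (x - 1) 0)\<^sup>2 = (x - 1)\<^sup>2"
    by simp
  also have "\<dots> \<le> (x - 1)\<^sup>2 + \<epsilon> * (\<epsilon> + 2 * (x - 1))"
    using True \<epsilon> by simp
  also have "\<dots> = (x - (1 - \<epsilon>))\<^sup>2"
    by (simp add: power2_eq_square algebra_simps)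
  also have "\<dots> \<le> 2 * sqrt (\<epsilon> * (1 - \<epsilon>)) * Jeps \<epsilon> x"
    using True \<epsilon> by (intro sq_dist_le_Jeps_above) auto
  finally show ?thesis .
next
  case False
  then show ?thesis
    using Jeps_nonneg[OF \<epsilon>, of x] \<epsilon> by simp
qed

section \<open>\<open>\<bbbP>\<^sub>1\<close> functions on a structured mesh\<close>

lemma structured_mesh_nondegenerate:
  "structured_mesh \<Omega> Th \<Longrightarrow> \<forall>I\<in>Th. \<forall>k. snd I $ k \<noteq> 0"
  unfolding structured_mesh_def by blast

lemma p1grad_add: "p1grad I (\<lambda>y. f y + g y) = p1grad I f + p1grad I g"
  by (simp add: p1grad_def vec_eq_iff add_divide_distrib[symmetric] algebra_simps)

lemma p1grad_diff: "p1grad I (\<lambda>y. f y - g y) = p1grad I f - p1grad I g"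
  by (simp add: p1grad_def vec_eq_iff diff_divide_distrib)

lemma p1grad_cmult: "p1grad I (\<lambda>y. c * f y) = c *\<^sub>R p1grad I f"
  by (simp add: p1grad_def vec_eq_iff algebra_simps)

lemma p1loc_add: "p1loc I (\<lambda>y. f y + g y) x = p1loc I f x + p1loc I g x"
  by (simp add: p1loc_def p1grad_add inner_add_left)

lemma p1loc_diff: "p1loc I (\<lambda>y. f y - g y) x = p1loc I f x - p1loc I g x"
  by (simp add: p1loc_def p1grad_diff inner_diff_left)

lemma p1loc_cmult: "p1loc I (\<lambda>y. c * f y) x = c * p1loc I f x"
  by (simp add: p1loc_def p1grad_cmult algebra_simps)

lemma p1loc_convex_combination:
  assumes "u + v = 1"
  shows "p1loc I f (u *\<^sub>R x + v *\<^sub>R y) = u * p1loc I f x + v * p1loc I f y"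
proof -
  have "u *\<^sub>R x + v *\<^sub>R y - fst I = u *\<^sub>R (x - fst I) + v *\<^sub>R (y - fst I)"
    using assms by (simp add: algebra_simps flip: scaleR_add_left)
  then show ?thesis
    using assms unfolding p1loc_def by (simp add: inner_add_right algebra_simps flip: distrib_right)
qed

lemma continuous_on_p1loc [continuous_intros]: "continuous_on S (p1loc I f)"
  unfolding p1loc_def by (intro continuous_intros)

lemma p1loc_verts:
  assumes "\<forall>k. snd I $ k \<noteq> 0" "z \<in> verts I"
  shows "p1loc I f z = f z"
  using assms unfolding verts_def p1loc_def p1grad_def vtx_def
  by (auto simp: inner_axis)

lemma convex_on_p1loc_le:
  assumes nondeg: "\<forall>k. snd I $ k \<noteq> 0" and g: "convex_on UNIV g" and x: "x \<in> elem_set I"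
  shows "g (p1loc I f x) \<le> p1loc I (\<lambda>y. g (f y)) x"
proof -
  let ?S = "{x. g (p1loc I f x) \<le> p1loc I (\<lambda>y. g (f y)) x}"
  have "convex ?S"
  proof (rule convexI)
    fix x y and u v :: real
    assume "x \<in> ?S" "y \<in> ?S" and uv: "0 \<le> u" "0 \<le> v" "u + v = 1"
    have "g (p1loc I f (u *\<^sub>R x + v *\<^sub>R y)) = g (u *\<^sub>R p1loc I f x + v *\<^sub>R p1loc I f y)"
      using uv by (simp add: p1loc_convex_combination)
    also have "\<dots> \<le> u * g (p1loc I f x) + v * g (p1loc I f y)"
      using g uv unfolding convex_on_def by blast
    also have "\<dots> \<le> u * p1loc I (\<lambda>y. g (f y)) x + v * p1loc I (\<lambda>y. g (f y)) y"
      using \<open>x \<in> ?S\<close> \<open>y \<in> ?S\<close> uv by (auto intro!: add_mono mult_left_mono)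
    also have "\<dots> = p1loc I (\<lambda>y. g (f y)) (u *\<^sub>R x + v *\<^sub>R y)"
      using uv by (simp add: p1loc_convex_combination)
    finally show "u *\<^sub>R x + v *\<^sub>R y \<in> ?S" by simp
  qed
  moreover have "verts I \<subseteq> ?S"
    using p1loc_verts[OF nondeg] by auto
  ultimately have "elem_set I \<subseteq> ?S"
    unfolding elem_set_def by (rule hull_minimal[rotated])
  then show ?thesis using x by auto
qed

lemma p1loc_nonneg:
  assumes "\<forall>k. snd I $ k \<noteq> 0" "\<And>y. 0 \<le> f y" "x \<in> elem_set I"
  shows "0 \<le> p1loc I f x"
proof -
  have "convex {x. 0 \<le> p1loc I f x}"
    unfolding convex_def by (auto simp: p1loc_convex_combination)
  moreover have "verts I \<subseteq> {x. 0 \<le> p1loc I f x}"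
    using assms p1loc_verts[OF assms(1)] by auto
  ultimately have "elem_set I \<subseteq> {x. 0 \<le> p1loc I f x}"
    unfolding elem_set_def by (rule hull_minimal[rotated])
  then show ?thesis
    using assms(3) by auto
qed

lemma p1loc_mono:
  assumes "\<forall>k. snd I $ k \<noteq> 0" "\<And>y. f y \<le> g y" "x \<in> elem_set I"
  shows "p1loc I f x \<le> p1loc I g x"
  using p1loc_nonneg[OF assms(1), of "\<lambda>y. g y - f y" x] assms by (simp add: p1loc_diff)

lemma integrable_on_elem_set:
  fixes f :: "real^'d::finite \<Rightarrow> real"
  assumes "continuous_on (elem_set I) f"
  shows "f integrable_on elem_set I"
proof -
  have "compact (elem_set I)"
    unfolding elem_set_def verts_def by (intro finite_imp_compact_convex_hull) simp
  then have "integrable lborel (\<lambda>x. indicator (elem_set I) x *\<^sub>R f x)"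
    using assms by (rule borel_integrable_compact)
  then have "(\<lambda>x. indicator (elem_set I) x *\<^sub>R f x) integrable_on UNIV"
    using has_integral_integral_lborel by blast
  moreover have "(\<lambda>x. indicator (elem_set I) x *\<^sub>R f x) = (\<lambda>x. if x \<in> elem_set I then f x else 0)"
    by (auto simp: indicator_def)
  ultimately show ?thesis
    by (simp add: integrable_restrict_UNIV)
qed

lemma mint_add:
  assumes "\<And>I. I \<in> Th \<Longrightarrow> f I integrable_on elem_set I"
    and "\<And>I. I \<in> Th \<Longrightarrow> g I integrable_on elem_set I"
  shows "mint Th (\<lambda>I x. f I x + g I x) = mint Th f + mint Th g"
  unfolding mint_def sum.distrib[symmetric]
  by (rule sum.cong[OF refl]) (simp add: integral_add assms)

lemma mint_cmult: "mint Th (\<lambda>I x. c * f I x) = c * mint Th f"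
  unfolding mint_def by (simp add: sum_distrib_left)

lemma mint_mono:
  assumes "\<And>I. I \<in> Th \<Longrightarrow> f I integrable_on elem_set I"
    and "\<And>I. I \<in> Th \<Longrightarrow> g I integrable_on elem_set I"
    and "\<And>I x. I \<in> Th \<Longrightarrow> x \<in> elem_set I \<Longrightarrow> f I x \<le> g I x"
  shows "mint Th f \<le> mint Th g"
  unfolding mint_def by (intro sum_mono integral_le) (auto simp: assms)

lemma mint_nonneg:
  assumes "\<And>I. I \<in> Th \<Longrightarrow> f I integrable_on elem_set I"
    and "\<And>I x. I \<in> Th \<Longrightarrow> x \<in> elem_set I \<Longrightarrow> 0 \<le> f I x"
  shows "0 \<le> mint Th f"
  unfolding mint_def by (intro sum_nonneg integral_nonneg) (auto simp: assms)

section \<open>Stability of the scheme\<close>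

lemma deriv_Fc: "deriv (Fc \<eta>) = (\<lambda>p. (4 * p ^ 3 - 6 * p\<^sup>2 + 3 * p) / (4 * \<eta>\<^sup>2))"
proof
  fix p :: real
  have "((\<lambda>p. p ^ 4 - 2 * p ^ 3 + 3 / 2 * p\<^sup>2) has_real_derivative 4 * p ^ 3 - 6 * p\<^sup>2 + 3 * p) (at p)"
    by (auto intro!: derivative_eq_intros simp: power2_eq_square power3_eq_cube)
  then show "deriv (Fc \<eta>) p = (4 * p ^ 3 - 6 * p\<^sup>2 + 3 * p) / (4 * \<eta>\<^sup>2)"
    unfolding Fc_def[abs_def] by (intro DERIV_imp_deriv DERIV_cdivide)
qed

lemma deriv_Fe: "deriv (Fe \<eta>) = (\<lambda>p. - p / (4 * \<eta>\<^sup>2))"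
proof
  fix p :: real
  have "((\<lambda>p. - p\<^sup>2 / 2) has_real_derivative - p) (at p)"
    by (auto intro!: derivative_eq_intros)
  then have "((\<lambda>p. - p\<^sup>2 / 2 / (4 * \<eta>\<^sup>2)) has_real_derivative - p / (4 * \<eta>\<^sup>2)) (at p)"
    by (rule DERIV_cdivide)
  then show "deriv (Fe \<eta>) p = - p / (4 * \<eta>\<^sup>2)"
    unfolding Fe_def[abs_def] by (intro DERIV_imp_deriv) simp
qed

lemma Ffun_nonneg: "0 \<le> Ffun \<eta> x"
  by (simp add: Ffun_def)

lemma Ffun_le_splitting:
  "Ffun \<eta> a \<le> Ffun \<eta> b + (deriv (Fc \<eta>) a + deriv (Fe \<eta>) b) * (a - b)"
proof -
  define k where "k = 1 / (4 * \<eta>\<^sup>2)"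
  have k: "x / (4 * \<eta>\<^sup>2) = k * x" for x
    by (simp add: k_def)
  have "Ffun \<eta> b + (deriv (Fc \<eta>) a + deriv (Fe \<eta>) b) * (a - b) - Ffun \<eta> a
      = k * ((a - b)\<^sup>2 * ((a + b - 1)\<^sup>2 + (2 * a - 1)\<^sup>2 / 2 + 1 / 2))"
    unfolding deriv_Fc deriv_Fe Ffun_def k
    by (simp add: power2_eq_square power3_eq_cube field_simps)
  moreover have "0 \<le> k * ((a - b)\<^sup>2 * ((a + b - 1)\<^sup>2 + (2 * a - 1)\<^sup>2 / 2 + 1 / 2))"
    by (simp add: k_def)
  ultimately show ?thesis
    by linarith
qed

lemma half_power2_norm_le:
  fixes a b :: "'a::real_inner"
  shows "(norm a)\<^sup>2 / 2 \<le> (norm b)\<^sup>2 / 2 + a \<bullet> (a - b)"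
proof -
  have "0 \<le> (a - b) \<bullet> (a - b)"
    by simp
  then show ?thesis
    by (simp add: power2_norm_eq_inner inner_diff_left inner_diff_right inner_commute)
qed

lemma MJ_nonneg: "0 \<le> MJ \<epsilon> \<phi> I k"
  by (simp add: MJ_def Let_def)

lemma mobility_young_ineq:
  fixes D :: "real \<Rightarrow> real"
  assumes M: "M = (if b \<noteq> a then ((b - a) / (D b - D a))\<^sup>2 else c\<^sup>2)"
  shows "- (M * g * ((D b - D a) / h)) \<le> M * g\<^sup>2 / 2 + ((b - a) / h)\<^sup>2 / 2"
proof (cases "b = a \<or> D b = D a \<or> h = 0")
  case True
  then have "M * g * ((D b - D a) / h) = 0"
    using M by auto
  moreover have "0 \<le> M * g\<^sup>2" "0 \<le> ((b - a) / h)\<^sup>2"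
    using M by simp_all
  ultimately show ?thesis
    by linarith
next
  case False
  define X Y where "X = (b - a) / (D b - D a) * g" and "Y = (b - a) / h"
  have "M * g * ((D b - D a) / h) = X * Y" and "M * g\<^sup>2 = X\<^sup>2"
    using False M unfolding X_def Y_def by (simp_all add: power2_eq_square)
  moreover have "(X + Y)\<^sup>2 = X\<^sup>2 + 2 * (X * Y) + Y\<^sup>2"
    by (simp add: power2_eq_square algebra_simps)
  moreover have "0 \<le> (X + Y)\<^sup>2"
    by simp
  ultimately show ?thesis
    unfolding Y_def[symmetric] by linarith
qed

definition dissipation ::
    "real \<Rightarrow> 'd::finite elem set \<Rightarrow> (real^'d \<Rightarrow> real) \<Rightarrow> (real^'d \<Rightarrow> real) \<Rightarrow> real" where
  "dissipation \<epsilon> Th \<phi> \<mu> = mint Th (\<lambda>I x. \<Sum>k\<in>UNIV. MJ \<epsilon> \<phi> I k * (p1grad I \<mu> $ k)\<^sup>2)"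

lemma dissipation_nonneg: "0 \<le> dissipation \<epsilon> Th \<phi> \<mu>"
  unfolding dissipation_def
  by (rule mint_nonneg)
    (auto intro!: integrable_on_elem_set continuous_intros sum_nonneg mult_nonneg_nonneg MJ_nonneg)

lemma integrable_energy_density:
  "(\<lambda>x. (norm (p1grad I u))\<^sup>2 / 2 + Ffun \<eta> (p1loc I u x)) integrable_on elem_set I"
  unfolding Ffun_def divide_inverse by (intro integrable_on_elem_set continuous_intros)

lemma energy_nonneg: "0 \<le> energy \<eta> Th u"
  unfolding energy_def
  by (rule mint_nonneg[OF integrable_energy_density]) (simp add: Ffun_nonneg)

lemma Jint_nonneg:
  assumes "\<forall>I\<in>Th. \<forall>k. snd I $ k \<noteq> 0" "0 < \<epsilon>" "\<epsilon> < 1 / 2"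
  shows "0 \<le> Jint \<epsilon> Th u"
  unfolding Jint_def using assms
  by (intro mint_nonneg) (auto intro!: integrable_on_elem_set continuous_intros p1loc_nonneg Jeps_nonneg)

lemma Jeps_step_lumped_test:
  assumes "Jeps_step \<eta> \<epsilon> Th dt u v w" "dt \<noteq> 0"
  shows "lumped Th (\<lambda>y. v y - u y) \<psi>
    = - dt * mint Th (\<lambda>I x. \<Sum>k\<in>UNIV. MJ \<epsilon> v I k * p1grad I w $ k * p1grad I \<psi> $ k)"
proof -
  have "lumped Th (\<lambda>y. v y - u y) \<psi> / dt
      + mint Th (\<lambda>I x. \<Sum>k\<in>UNIV. MJ \<epsilon> v I k * p1grad I w $ k * p1grad I \<psi> $ k) = 0"
    using assms(1) unfolding Jeps_step_def by blast
  then show ?thesis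
    using assms(2) by (simp add: field_simps)
qed

lemma Jeps_step_energy_decay:
  fixes Th :: "'d::finite elem set"
  assumes step: "Jeps_step \<eta> \<epsilon> Th dt u v w" and "dt \<noteq> 0"
  shows "energy \<eta> Th v + dt * dissipation \<epsilon> Th v w \<le> energy \<eta> Th u"
proof -
  define e where "e \<phi> I x = (norm (p1grad I \<phi>))\<^sup>2 / 2 + Ffun \<eta> (p1loc I \<phi> x)"
    for \<phi> I and x :: "real^'d"
  define A where "A I x = p1grad I v \<bullet> p1grad I (\<lambda>y. v y - u y)" for I and x :: "real^'d"
  define B where "B I x = (deriv (Fc \<eta>) (p1loc I v x) + deriv (Fe \<eta>) (p1loc I u x))
      * p1loc I (\<lambda>y. v y - u y) x" for I x
  have energy_e: "energy \<eta> Th \<phi> = mint Th (e \<phi>)" for \<phi>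
    by (simp add: energy_def e_def[abs_def])
  have int: "e \<phi> I integrable_on elem_set I" "A I integrable_on elem_set I"
    "B I integrable_on elem_set I" for \<phi> I
  proof -
    show "e \<phi> I integrable_on elem_set I"
      unfolding e_def by (rule integrable_energy_density)
    show "A I integrable_on elem_set I" "B I integrable_on elem_set I"
      unfolding A_def B_def deriv_Fc deriv_Fe divide_inverse
      by (intro integrable_on_elem_set continuous_intros)+
  qed
  have "mint Th A + mint Th B = lumped Th w (\<lambda>y. v y - u y)"
    using step unfolding Jeps_step_def A_def B_def by blast
  also have "\<dots> = lumped Th (\<lambda>y. v y - u y) w"
    by (simp add: lumped_def mult.commute)
  also have "\<dots> = - dt * dissipation \<epsilon> Th v w"
    using Jeps_step_lumped_test[OF assms, of w]
    by (simp add: dissipation_def power2_eq_square mult.assoc)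
  finally have test: "mint Th A + mint Th B = - dt * dissipation \<epsilon> Th v w" .
  have "energy \<eta> Th v \<le> mint Th (\<lambda>I x. e u I x + (A I x + B I x))"
    unfolding energy_e
  proof (rule mint_mono)
    fix I x
    show "e v I x \<le> e u I x + (A I x + B I x)"
      using half_power2_norm_le[of "p1grad I v" "p1grad I u"]
        Ffun_le_splitting[of \<eta> "p1loc I v x" "p1loc I u x"]
      unfolding e_def A_def B_def p1grad_diff p1loc_diff by linarith
  qed (intro int integrable_add)+
  also have "\<dots> = energy \<eta> Th u + (mint Th A + mint Th B)"
    unfolding energy_e by (simp add: mint_add int integrable_add)
  finally show ?thesis
    unfolding test by simp
qed

lemma Jint_le_lumped_dJeps:
  fixes Th :: "'d::finite elem set"
  assumes nondeg: "\<forall>I\<in>Th. \<forall>k. snd I $ k \<noteq> 0" and \<epsilon>: "0 < \<epsilon>" "\<epsilon> < 1 / 2"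
  shows "Jint \<epsilon> Th v \<le> Jint \<epsilon> Th u + lumped Th (\<lambda>y. v y - u y) (\<lambda>y. dJeps \<epsilon> (v y))"
proof -
  have "Jint \<epsilon> Th v \<le> mint Th (\<lambda>I x. p1loc I (\<lambda>y. Jeps \<epsilon> (u y)) x
      + p1loc I (\<lambda>y. (v y - u y) * dJeps \<epsilon> (v y)) x)"
    unfolding Jint_def
  proof (rule mint_mono)
    fix I x
    assume "I \<in> Th" "x \<in> elem_set I"
    moreover have "Jeps \<epsilon> (v y) \<le> Jeps \<epsilon> (u y) + (v y - u y) * dJeps \<epsilon> (v y)" for y
      using Jeps_tangent_le[OF \<epsilon>, of "v y" "u y"] by (simp add: algebra_simps)
    ultimately show "p1loc I (\<lambda>y. Jeps \<epsilon> (v y)) x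
        \<le> p1loc I (\<lambda>y. Jeps \<epsilon> (u y)) x + p1loc I (\<lambda>y. (v y - u y) * dJeps \<epsilon> (v y)) x"
      using nondeg by (simp add: p1loc_mono flip: p1loc_add)
  qed (auto intro!: integrable_on_elem_set continuous_intros)
  also have "\<dots> = Jint \<epsilon> Th u + lumped Th (\<lambda>y. v y - u y) (\<lambda>y. dJeps \<epsilon> (v y))"
    unfolding Jint_def lumped_def
    by (rule mint_add) (auto intro!: integrable_on_elem_set continuous_intros)
  finally show ?thesis .
qed

lemma mobility_cross_term_le_pointwise:
  assumes \<epsilon>: "0 < \<epsilon>" "\<epsilon> < 1 / 2"
  shows "- (\<Sum>k\<in>UNIV. MJ \<epsilon> v I k * p1grad I w $ k * p1grad I (\<lambda>y. dJeps \<epsilon> (v y)) $ k)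
    \<le> 1 / 2 * (\<Sum>k\<in>UNIV. MJ \<epsilon> v I k * (p1grad I w $ k)\<^sup>2) + (norm (p1grad I v))\<^sup>2 / 2"
proof -
  have "- (MJ \<epsilon> v I k * p1grad I w $ k * p1grad I (\<lambda>y. dJeps \<epsilon> (v y)) $ k)
      \<le> MJ \<epsilon> v I k * (p1grad I w $ k)\<^sup>2 / 2 + (p1grad I v $ k)\<^sup>2 / 2" for k
  proof -
    have MJ: "MJ \<epsilon> v I k = (if v (vtx I k) \<noteq> v (fst I)
        then ((v (vtx I k) - v (fst I)) / (dJeps \<epsilon> (v (vtx I k)) - dJeps \<epsilon> (v (fst I))))\<^sup>2
        else (1 / deriv (dJeps \<epsilon>) (v (fst I)))\<^sup>2)"
      by (simp add: MJ_def Let_def deriv_Jeps[OF \<epsilon>])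
    have grad:
      "p1grad I (\<lambda>y. dJeps \<epsilon> (v y)) $ k = (dJeps \<epsilon> (v (vtx I k)) - dJeps \<epsilon> (v (fst I))) / snd I $ k"
      "p1grad I v $ k = (v (vtx I k) - v (fst I)) / snd I $ k"
      by (simp_all add: p1grad_def)
    show ?thesis
      unfolding grad by (rule mobility_young_ineq[OF MJ])
  qed
  then have "- (\<Sum>k\<in>UNIV. MJ \<epsilon> v I k * p1grad I w $ k * p1grad I (\<lambda>y. dJeps \<epsilon> (v y)) $ k)
      \<le> (\<Sum>k\<in>UNIV. MJ \<epsilon> v I k * (p1grad I w $ k)\<^sup>2 / 2 + (p1grad I v $ k)\<^sup>2 / 2)"
    by (simp add: sum_mono flip: sum_negf)
  also have "\<dots> = 1 / 2 * (\<Sum>k\<in>UNIV. MJ \<epsilon> v I k * (p1grad I w $ k)\<^sup>2) + (norm (p1grad I v))\<^sup>2 / 2"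
    unfolding power2_norm_eq_inner inner_vec_def
    by (simp add: sum.distrib sum_divide_distrib power2_eq_square)
  finally show ?thesis .
qed

lemma mobility_cross_term_le:
  fixes Th :: "'d::finite elem set"
  assumes \<epsilon>: "0 < \<epsilon>" "\<epsilon> < 1 / 2"
  shows "- mint Th (\<lambda>I x. \<Sum>k\<in>UNIV. MJ \<epsilon> v I k * p1grad I w $ k * p1grad I (\<lambda>y. dJeps \<epsilon> (v y)) $ k)
    \<le> dissipation \<epsilon> Th v w / 2 + energy \<eta> Th v"
proof -
  have "- mint Th (\<lambda>I x. \<Sum>k\<in>UNIV. MJ \<epsilon> v I k * p1grad I w $ k * p1grad I (\<lambda>y. dJeps \<epsilon> (v y)) $ k)
      = mint Th (\<lambda>I x. - (\<Sum>k\<in>UNIV. MJ \<epsilon> v I k * p1grad I w $ k * p1grad I (\<lambda>y. dJeps \<epsilon> (v y)) $ k))"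
    unfolding mint_def by (simp add: sum_negf)
  also have "\<dots> \<le> mint Th (\<lambda>I x. 1 / 2 * (\<Sum>k\<in>UNIV. MJ \<epsilon> v I k * (p1grad I w $ k)\<^sup>2)
      + ((norm (p1grad I v))\<^sup>2 / 2 + Ffun \<eta> (p1loc I v x)))"
  proof (rule mint_mono)
    fix I x
    show "- (\<Sum>k\<in>UNIV. MJ \<epsilon> v I k * p1grad I w $ k * p1grad I (\<lambda>y. dJeps \<epsilon> (v y)) $ k)
        \<le> 1 / 2 * (\<Sum>k\<in>UNIV. MJ \<epsilon> v I k * (p1grad I w $ k)\<^sup>2)
          + ((norm (p1grad I v))\<^sup>2 / 2 + Ffun \<eta> (p1loc I v x))"
      using mobility_cross_term_le_pointwise[OF \<epsilon>, of v I w] Ffun_nonneg[of \<eta> "p1loc I v x"]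
      by linarith
  qed (intro integrable_on_elem_set continuous_intros integrable_add integrable_energy_density)+
  also have "\<dots> = dissipation \<epsilon> Th v w / 2 + energy \<eta> Th v"
    unfolding dissipation_def energy_def
    by (subst mint_add)
      (simp_all only: mint_cmult integrable_energy_density integrable_on_elem_set continuous_on_const)
  finally show ?thesis .
qed

lemma Jeps_step_Jint_growth:
  fixes Th :: "'d::finite elem set"
  assumes nondeg: "\<forall>I\<in>Th. \<forall>k. snd I $ k \<noteq> 0" and \<epsilon>: "0 < \<epsilon>" "\<epsilon> < 1 / 2"
    and step: "Jeps_step \<eta> \<epsilon> Th dt u v w" and dt: "0 < dt"
  shows "Jint \<epsilon> Th v \<le> Jint \<epsilon> Th u + dt * (dissipation \<epsilon> Th v w / 2 + energy \<eta> Th v)"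
proof -
  let ?R = "mint Th (\<lambda>I x. \<Sum>k\<in>UNIV. MJ \<epsilon> v I k * p1grad I w $ k * p1grad I (\<lambda>y. dJeps \<epsilon> (v y)) $ k)"
  have "Jint \<epsilon> Th v \<le> Jint \<epsilon> Th u + dt * - ?R"
    using Jint_le_lumped_dJeps[OF nondeg \<epsilon>, of v u] Jeps_step_lumped_test[OF step, of "\<lambda>y. dJeps \<epsilon> (v y)"] dt
    by simp
  also have "\<dots> \<le> Jint \<epsilon> Th u + dt * (dissipation \<epsilon> Th v w / 2 + energy \<eta> Th v)"
    using mobility_cross_term_le[OF \<epsilon>, where Th = Th and v = v and w = w and \<eta> = \<eta>] dt
    by (intro add_left_mono mult_left_mono) auto
  finally show ?thesis .
qed

lemma Jeps_scheme_stability: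
  fixes Th :: "'d::finite elem set"
  assumes nondeg: "\<forall>I\<in>Th. \<forall>k. snd I $ k \<noteq> 0" and \<epsilon>: "0 < \<epsilon>" "\<epsilon> < 1 / 2" and dt: "0 < dt"
    and steps: "\<forall>n<N. Jeps_step \<eta> \<epsilon> Th dt (\<phi> n) (\<phi> (Suc n)) (\<mu> (Suc n))"
  shows "m \<le> N \<Longrightarrow> energy \<eta> Th (\<phi> m) \<le> energy \<eta> Th (\<phi> 0) \<and>
    Jint \<epsilon> Th (\<phi> m) + energy \<eta> Th (\<phi> m) / 2
      \<le> Jint \<epsilon> Th (\<phi> 0) + energy \<eta> Th (\<phi> 0) / 2 + real m * dt * energy \<eta> Th (\<phi> 0)"
proof (induction m)
  case 0
  show ?case by simp
next
  case (Suc m)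
  let ?E = "\<lambda>n. energy \<eta> Th (\<phi> n)" and ?Q = "dissipation \<epsilon> Th (\<phi> (Suc m)) (\<mu> (Suc m))"
  have step: "Jeps_step \<eta> \<epsilon> Th dt (\<phi> m) (\<phi> (Suc m)) (\<mu> (Suc m))"
    using steps Suc.prems by simp
  have IH: "?E m \<le> ?E 0"
    "Jint \<epsilon> Th (\<phi> m) + ?E m / 2 \<le> Jint \<epsilon> Th (\<phi> 0) + ?E 0 / 2 + real m * dt * ?E 0"
    using Suc by simp_all
  have decay: "?E (Suc m) + dt * ?Q \<le> ?E m"
    using Jeps_step_energy_decay[OF step] dt by simp
  have growth: "Jint \<epsilon> Th (\<phi> (Suc m)) \<le> Jint \<epsilon> Th (\<phi> m) + dt * (?Q / 2 + ?E (Suc m))"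
    by (rule Jeps_step_Jint_growth[OF nondeg \<epsilon> step dt])
  have "0 \<le> dt * ?Q"
    using dt by (simp add: dissipation_nonneg)
  then have "?E (Suc m) \<le> ?E 0"
    using decay IH(1) by linarith
  then have "dt * ?E (Suc m) \<le> dt * ?E 0"
    using dt by simp
  then show ?case
    using \<open>?E (Suc m) \<le> ?E 0\<close> IH(2) decay growth by (simp add: algebra_simps)
qed

lemma Jeps_scheme_Jint_le:
  fixes Th :: "'d::finite elem set"
  assumes nondeg: "\<forall>I\<in>Th. \<forall>k. snd I $ k \<noteq> 0" and \<epsilon>: "0 < \<epsilon>" "\<epsilon> < 1 / 2" and dt: "0 < dt"
    and steps: "\<forall>n<N. Jeps_step \<eta> \<epsilon> Th dt (\<phi> n) (\<phi> (Suc n)) (\<mu> (Suc n))" and "m \<le> N"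
  shows "Jint \<epsilon> Th (\<phi> m) \<le> Jint \<epsilon> Th (\<phi> 0) + (1 / 2 + real N * dt) * energy \<eta> Th (\<phi> 0)"
proof -
  have "real m * dt * energy \<eta> Th (\<phi> 0) \<le> real N * dt * energy \<eta> Th (\<phi> 0)"
    using \<open>m \<le> N\<close> dt by (intro mult_right_mono energy_nonneg) auto
  moreover have "0 \<le> energy \<eta> Th (\<phi> m)"
    by (rule energy_nonneg)
  ultimately show ?thesis
    using Jeps_scheme_stability[OF nondeg \<epsilon> dt steps \<open>m \<le> N\<close>] by (simp add: algebra_simps)
qed

lemma mint_p1loc_sq_le:
  fixes Th :: "'d::finite elem set"
  assumes nondeg: "\<forall>I\<in>Th. \<forall>k. snd I $ k \<noteq> 0" and fg: "\<And>y. (f y)\<^sup>2 \<le> c * g y"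
  shows "mint Th (\<lambda>I x. (p1loc I f x)\<^sup>2) \<le> c * mint Th (\<lambda>I. p1loc I g)"
proof -
  have "mint Th (\<lambda>I x. (p1loc I f x)\<^sup>2) \<le> mint Th (\<lambda>I x. c * p1loc I g x)"
  proof (rule mint_mono)
    fix I x
    assume I: "I \<in> Th" and x: "x \<in> elem_set I"
    have "(p1loc I f x)\<^sup>2 \<le> p1loc I (\<lambda>y. (f y)\<^sup>2) x"
      using bspec[OF nondeg I] convex_power2 x by (intro convex_on_p1loc_le) auto
    also have "\<dots> \<le> p1loc I (\<lambda>y. c * g y) x"
      using bspec[OF nondeg I] fg x by (intro p1loc_mono) auto
    finally show "(p1loc I f x)\<^sup>2 \<le> c * p1loc I g x"
      by (simp add: p1loc_cmult)
  qed (intro integrable_on_elem_set continuous_intros)+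
  then show ?thesis
    by (simp add: mint_cmult)
qed

lemma neg_sq_le_Jint:
  fixes Th :: "'d::finite elem set"
  assumes "\<forall>I\<in>Th. \<forall>k. snd I $ k \<noteq> 0" and "0 < \<epsilon>" "\<epsilon> < 1 / 2"
  shows "neg_sq Th u \<le> 2 * sqrt (\<epsilon> * (1 - \<epsilon>)) * Jint \<epsilon> Th u"
  unfolding neg_sq_def Jint_def
  by (rule mint_p1loc_sq_le[OF assms(1) neg_part_sq_le_Jeps[OF assms(2,3)]])

lemma pos_sq_le_Jint:
  fixes Th :: "'d::finite elem set"
  assumes "\<forall>I\<in>Th. \<forall>k. snd I $ k \<noteq> 0" and "0 < \<epsilon>" "\<epsilon> < 1 / 2"
  shows "pos_sq Th u \<le> 2 * sqrt (\<epsilon> * (1 - \<epsilon>)) * Jint \<epsilon> Th u"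
  unfolding pos_sq_def Jint_def
  by (rule mint_p1loc_sq_le[OF assms(1) overshoot_sq_le_Jeps[OF assms(2,3)]])

theorem corollary2:
  fixes \<Omega> :: "(real^'d::finite) set" and T \<eta> :: real
  assumes "CARD('d) \<le> 3" and "T > 0" and "\<eta> > 0"
  shows "\<exists>C :: real \<Rightarrow> real \<Rightarrow> real.
    \<forall>(Th :: 'd elem set) \<epsilon> (N :: nat) (phi :: nat \<Rightarrow> real^'d \<Rightarrow> real) mu.
      structured_mesh \<Omega> Th \<and> 0 < \<epsilon> \<and> \<epsilon> < 1 / 2 \<and> N \<ge> 1 \<and>
      (\<forall>n<N. Jeps_step \<eta> \<epsilon> Th (T / real N) (phi n) (phi (Suc n)) (mu (Suc n)))
      \<longrightarrow> (\<forall>n<N.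
            neg_sq Th (phi (Suc n))
              \<le> C (energy \<eta> Th (phi 0)) (Jint \<epsilon> Th (phi 0)) * sqrt (\<epsilon> * (1 - \<epsilon>)) \<and>
            pos_sq Th (phi (Suc n))
              \<le> C (energy \<eta> Th (phi 0)) (Jint \<epsilon> Th (phi 0)) * sqrt (\<epsilon> * (1 - \<epsilon>)) \<and>
            C (energy \<eta> Th (phi 0)) (Jint \<epsilon> Th (phi 0)) * sqrt (\<epsilon> * (1 - \<epsilon>))
              \<le> C (energy \<eta> Th (phi 0)) (Jint \<epsilon> Th (phi 0)) * sqrt \<epsilon>)"
proof (intro exI[of _ "\<lambda>E J. 2 * (J + (1 / 2 + T) * E)"] allI impI, elim conjE)
  fix Th :: "'d elem set" and \<epsilon> N and phi :: "nat \<Rightarrow> real^'d \<Rightarrow> real" and mu n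
  assume mesh: "structured_mesh \<Omega> Th" and \<epsilon>: "0 < \<epsilon>" "\<epsilon> < 1 / 2" and N: "1 \<le> N"
    and steps: "\<forall>n<N. Jeps_step \<eta> \<epsilon> Th (T / real N) (phi n) (phi (Suc n)) (mu (Suc n))"
    and "n < N"
  let ?C = "2 * (Jint \<epsilon> Th (phi 0) + (1 / 2 + T) * energy \<eta> Th (phi 0))"
    and ?s = "sqrt (\<epsilon> * (1 - \<epsilon>))"
  have nondeg: "\<forall>I\<in>Th. \<forall>k. snd I $ k \<noteq> 0"
    using mesh by (rule structured_mesh_nondegenerate)
  have "2 * Jint \<epsilon> Th (phi (Suc n)) \<le> ?C"
    using Jeps_scheme_Jint_le[OF nondeg \<epsilon> _ steps, of "Suc n"] \<open>n < N\<close> N \<open>T > 0\<close> by simp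
  then have J: "2 * ?s * Jint \<epsilon> Th (phi (Suc n)) \<le> ?C * ?s"
    using \<epsilon> mult_right_mono[of _ ?C ?s] by (simp add: mult_ac)
  have "0 \<le> ?C"
    using \<open>2 * Jint \<epsilon> Th (phi (Suc n)) \<le> ?C\<close> Jint_nonneg[OF nondeg \<epsilon>, of "phi (Suc n)"] by linarith
  moreover have "?s \<le> sqrt \<epsilon>"
    using \<epsilon> by (simp add: mult_le_cancel_left1)
  ultimately show "neg_sq Th (phi (Suc n)) \<le> ?C * ?s \<and> pos_sq Th (phi (Suc n)) \<le> ?C * ?s \<and>
      ?C * ?s \<le> ?C * sqrt \<epsilon>"
    using order_trans[OF neg_sq_le_Jint[OF nondeg \<epsilon>] J] order_trans[OF pos_sq_le_Jint[OF nondeg \<epsilon>] J]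
    by (simp add: mult_left_mono)
qed

end
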